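(* Fix $0\le\alpha\le1$ and a collection $\mathcal X$ of finite sets. If $0<\beta_0\le\beta$ and $D_{\alpha,\beta_0}$ is a metric on $\mathcal X$, then $D_{\alpha,\beta}$ is a metric on $\mathcal X$. That is, the set of $\beta>0$ for which $D_{\alpha,\beta}$ is a metric on $\mathcal X$ is upward closed.
   Context: For finite sets $X,Y$ let $m(X,Y)=\min\{|X\setminus Y|,|Y\setminus X|\}$ and $M(X,Y)=\max\{|X\setminus Y|,|Y\setminus X|\}$. For $0\le\alpha\le1$ and $\beta>0$, $$D_{\alpha,\beta}(X,Y)=\begin{cases}\beta\,\dfrac{\alpha m(X,Y)+(1-\alpha)M(X,Y)}{|X\cap Y|+\beta\big(\alpha m(X,Y)+(1-\alpha)M(X,Y)\big)} & \text{if } X\cup Y\neq\emptyset,\\[2mm] 0 & \text{if } X=Y=\emptyset.\end{cases}$$ *)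

theory Defs
  imports Complex_Main
begin

definition mdiff :: "'a set \<Rightarrow> 'a set \<Rightarrow> nat" where
  "mdiff X Y = min (card (X - Y)) (card (Y - X))"

definition Mdiff :: "'a set \<Rightarrow> 'a set \<Rightarrow> nat" where
  "Mdiff X Y = max (card (X - Y)) (card (Y - X))"

definition D :: "real \<Rightarrow> real \<Rightarrow> 'a set \<Rightarrow> 'a set \<Rightarrow> real" where
  "D \<alpha> \<beta> X Y =
     (if X \<union> Y = {} then 0
      else \<beta> * (\<alpha> * real (mdiff X Y) + (1 - \<alpha>) * real (Mdiff X Y)) /
           (real (card (X \<inter> Y)) + \<beta> * (\<alpha> * real (mdiff X Y) + (1 - \<alpha>) * real (Mdiff X Y))))"

definition is_metric_on :: "'b set \<Rightarrow> ('b \<Rightarrow> 'b \<Rightarrow> real) \<Rightarrow> bool" where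
  "is_metric_on C d \<longleftrightarrow>
     (\<forall>x\<in>C. \<forall>y\<in>C. d x y \<ge> 0) \<and>
     (\<forall>x\<in>C. \<forall>y\<in>C. d x y = 0 \<longleftrightarrow> x = y) \<and>
     (\<forall>x\<in>C. \<forall>y\<in>C. d x y = d y x) \<and>
     (\<forall>x\<in>C. \<forall>y\<in>C. \<forall>z\<in>C. d x z \<le> d x y + d y z)"

end

theory Submission
  imports Defs
begin

text \<open>Writing \<open>F\<close> for the weighted difference \<open>\<alpha> m + (1 - \<alpha>) M\<close> and \<open>I = |X \<inter> Y|\<close>, one has
  \<open>D\<^sub>\<alpha>\<^sub>,\<^sub>\<beta> = \<beta>F / (I + \<beta>F)\<close>, and a direct computation shows \<open>D\<^sub>\<alpha>\<^sub>,\<^sub>\<beta> = \<phi>\<^sub>t (D\<^sub>\<alpha>\<^sub>,\<^sub>\<beta>\<^sub>0)\<close> with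
  \<open>t = \<beta>/\<beta>\<^sub>0\<close> and \<open>\<phi>\<^sub>t x = t x / (1 + (t - 1) x)\<close>. For \<open>t \<ge> 1\<close> the map \<open>\<phi>\<^sub>t\<close> is nonnegative,
  vanishes only at 0, is nondecreasing and subadditive on \<open>[0, \<infinity>)\<close>, and any such map sends
  metrics to metrics. The identity does not depend on the values of the cardinalities.\<close>

lemma is_metric_on_comp:
  fixes \<phi> :: "real \<Rightarrow> real"
  assumes metric: "is_metric_on C d"
    and nonneg: "\<And>x. 0 \<le> x \<Longrightarrow> 0 \<le> \<phi> x"
    and zero_iff: "\<And>x. 0 \<le> x \<Longrightarrow> \<phi> x = 0 \<longleftrightarrow> x = 0"
    and mono: "\<And>x y. 0 \<le> x \<Longrightarrow> x \<le> y \<Longrightarrow> \<phi> x \<le> \<phi> y"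
    and subadd: "\<And>x y. 0 \<le> x \<Longrightarrow> 0 \<le> y \<Longrightarrow> \<phi> (x + y) \<le> \<phi> x + \<phi> y"
  shows "is_metric_on C (\<lambda>x y. \<phi> (d x y))"
  unfolding is_metric_on_def
proof (intro conjI ballI)
  have d_nonneg: "\<And>x y. x \<in> C \<Longrightarrow> y \<in> C \<Longrightarrow> 0 \<le> d x y"
    and d_zero: "\<And>x y. x \<in> C \<Longrightarrow> y \<in> C \<Longrightarrow> d x y = 0 \<longleftrightarrow> x = y"
    and d_sym: "\<And>x y. x \<in> C \<Longrightarrow> y \<in> C \<Longrightarrow> d x y = d y x"
    and d_triangle: "\<And>x y z. x \<in> C \<Longrightarrow> y \<in> C \<Longrightarrow> z \<in> C \<Longrightarrow> d x z \<le> d x y + d y z"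
    using metric unfolding is_metric_on_def by blast+
  fix x y assume xy: "x \<in> C" "y \<in> C"
  show "0 \<le> \<phi> (d x y)" using nonneg d_nonneg xy by blast
  show "\<phi> (d x y) = 0 \<longleftrightarrow> x = y" using zero_iff d_nonneg d_zero xy by blast
  show "\<phi> (d x y) = \<phi> (d y x)" using d_sym xy by simp
  fix z assume z: "z \<in> C"
  have "\<phi> (d x z) \<le> \<phi> (d x y + d y z)"
    using mono d_nonneg d_triangle xy z by blast
  also have "\<dots> \<le> \<phi> (d x y) + \<phi> (d y z)"
    using subadd d_nonneg xy z by blast
  finally show "\<phi> (d x z) \<le> \<phi> (d x y) + \<phi> (d y z)" .
qed

definition rescale :: "real \<Rightarrow> real \<Rightarrow> real" where
  "rescale t x = t * x / (1 + (t - 1) * x)"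

lemma rescale_denominator_pos: "1 \<le> (t::real) \<Longrightarrow> 0 \<le> x \<Longrightarrow> 0 < 1 + (t - 1) * x"
  using mult_nonneg_nonneg[of "t - 1" x] by linarith

lemma rescale_nonneg: "1 \<le> t \<Longrightarrow> 0 \<le> x \<Longrightarrow> 0 \<le> rescale t x"
  unfolding rescale_def by simp

lemma rescale_eq_0_iff: "1 \<le> t \<Longrightarrow> 0 \<le> x \<Longrightarrow> rescale t x = 0 \<longleftrightarrow> x = 0"
  unfolding rescale_def by (simp add: add_nonneg_eq_0_iff)

lemma rescale_mono:
  assumes "1 \<le> t" "0 \<le> x" "x \<le> y"
  shows "rescale t x \<le> rescale t y"
proof -
  have "t * x * (1 + (t - 1) * y) \<le> t * y * (1 + (t - 1) * x)"
    using assms by (simp add: algebra_simps mult_left_mono)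
  then show ?thesis
    unfolding rescale_def using assms rescale_denominator_pos[of t]
    by (simp add: divide_simps)
qed

lemma rescale_subadditive:
  assumes "1 \<le> t" "0 \<le> x" "0 \<le> y"
  shows "rescale t (x + y) \<le> rescale t x + rescale t y"
proof -
  have pos: "0 < 1 + (t - 1) * x" "0 < 1 + (t - 1) * y" "0 < 1 + (t - 1) * (x + y)"
    using assms by (simp_all add: rescale_denominator_pos)
  have "t * x / (1 + (t - 1) * (x + y)) \<le> t * x / (1 + (t - 1) * x)"
    using pos assms by (intro divide_left_mono) (auto simp: mult_left_mono)
  moreover have "t * y / (1 + (t - 1) * (x + y)) \<le> t * y / (1 + (t - 1) * y)"
    using pos assms by (intro divide_left_mono) (auto simp: mult_left_mono)
  ultimately show ?thesis
    unfolding rescale_def by (simp add: distrib_left add_divide_distrib)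
qed

lemma ratio_rescale:
  fixes I F b\<^sub>0 b :: real
  assumes "0 \<le> I" "0 \<le> F" "0 < b\<^sub>0" "b\<^sub>0 \<le> b"
  shows "b * F / (I + b * F) = rescale (b / b\<^sub>0) (b\<^sub>0 * F / (I + b\<^sub>0 * F))"
proof (cases "I + b\<^sub>0 * F = 0")
  case True
  then have "F = 0" using assms by (smt (verit) mult_pos_pos)
  then show ?thesis by (simp add: rescale_def)
next
  case False
  then have pos: "0 < I + b\<^sub>0 * F" using assms by (smt (verit) mult_nonneg_nonneg)
  have pos': "0 < I + b * F" using assms pos by (smt (verit) mult_right_mono)
  have "(b / b\<^sub>0 - 1) * (b\<^sub>0 * F / (I + b\<^sub>0 * F)) = (b - b\<^sub>0) * F / (I + b\<^sub>0 * F)"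
    using assms by (simp add: divide_simps)
  then have denom: "1 + (b / b\<^sub>0 - 1) * (b\<^sub>0 * F / (I + b\<^sub>0 * F)) = (I + b * F) / (I + b\<^sub>0 * F)"
    using pos by (simp add: field_simps)
  have numer: "b / b\<^sub>0 * (b\<^sub>0 * F / (I + b\<^sub>0 * F)) = b * F / (I + b\<^sub>0 * F)"
    using assms by simp
  have "rescale (b / b\<^sub>0) (b\<^sub>0 * F / (I + b\<^sub>0 * F)) = b * F / (I + b\<^sub>0 * F) / ((I + b * F) / (I + b\<^sub>0 * F))"
    unfolding rescale_def numer denom ..
  also have "\<dots> = b * F / (I + b * F)"
    using pos pos' by (simp add: divide_simps)
  finally show ?thesis ..
qed

lemma D_eq_rescale:
  assumes "0 \<le> \<alpha>" "\<alpha> \<le> 1" "0 < \<beta>\<^sub>0" "\<beta>\<^sub>0 \<le> \<beta>"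
  shows "D \<alpha> \<beta> X Y = rescale (\<beta> / \<beta>\<^sub>0) (D \<alpha> \<beta>\<^sub>0 X Y)"
proof (cases "X \<union> Y = {}")
  case True
  then show ?thesis by (simp add: D_def rescale_def)
next
  case False
  define F where "F = \<alpha> * real (mdiff X Y) + (1 - \<alpha>) * real (Mdiff X Y)"
  have "0 \<le> F" using assms unfolding F_def by simp
  then show ?thesis
    unfolding D_def F_def[symmetric] if_not_P[OF False]
    using assms(3,4) by (intro ratio_rescale) simp_all
qed

theorem mainTheorem6:
  fixes \<X> :: "'a set set" and \<alpha> \<beta>\<^sub>0 \<beta> :: real
  assumes "0 \<le> \<alpha>" and "\<alpha> \<le> 1"
    and "\<forall>X\<in>\<X>. finite X"
    and "0 < \<beta>\<^sub>0" and "\<beta>\<^sub>0 \<le> \<beta>"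
    and "is_metric_on \<X> (D \<alpha> \<beta>\<^sub>0)"
  shows "is_metric_on \<X> (D \<alpha> \<beta>)"
proof -
  define t where "t = \<beta> / \<beta>\<^sub>0"
  have t: "1 \<le> t" using assms(4,5) unfolding t_def by simp
  have D_eq: "D \<alpha> \<beta> = (\<lambda>X Y. rescale t (D \<alpha> \<beta>\<^sub>0 X Y))"
    unfolding t_def by (intro ext D_eq_rescale) (use assms in simp_all)
  show ?thesis
    unfolding D_eq using assms(6)
    by (rule is_metric_on_comp)
      (simp_all only: t rescale_nonneg rescale_eq_0_iff rescale_mono rescale_subadditive)
qed

end
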